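(* Let $u=0$ and $\theta\in(1/2,1]$. If there exists $p\in\mathbb R$ such that $$F\big(A^{\frac p2-1}BA^{-\frac p2}\big)\subseteq D(0,1)=\{z\in\mathbb C:|z|<1\},$$ then the $\theta$-method is unconditionally stable, i.e. it is stable for every step size $h=\tau/m$, $m\in\mathbb N$.
   Context: Let $N\in\mathbb N$, $\tau>0$, let $A\in M_N(\mathbb C)$ be Hermitian positive definite and $B\in M_N(\mathbb C)$ arbitrary, and consider the delay differential equation $y'(t)=-Ay(t)+By(t-\tau)$. Fix $\theta\in[0,1]$, $u\in[0,1)$ and $m\in\mathbb N$ (with $m\ge2$ if $u>0$), and set the step size $h=\tau/(m-u)$. The $\theta$-method (with linear interpolation of the delayed term) is the recursion, for $n\ge0$ and arbitrary starting values $y_{-m},\dots,y_0\in\mathbb C^N$, $$y_{n+1}=y_n+h(1-\theta)\big[-Ay_n+B((1-u)y_{n-m}+u\,y_{n-m+1})\big]+h\theta\big[-Ay_{n+1}+B((1-u)y_{n-m+1}+u\,y_{n-m+2})\big].$$ The method is called stable (for these $\theta,u,m,h$) if for every choice of starting values $y_n\to0$ as $n\to\infty$. For $s\in\mathbb R$, $A^s$ is defined through the spectral decomposition of $A$. For $M\in M_N(\mathbb C)$, $F(M)=\{x^*Mx: x\in\mathbb C^N,\ x^*x=1\}$ is the field of values. *)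

theory Defs
  imports "HOL-Analysis.Analysis"
begin

text \<open>N x N complex matrices are represented as complex^'n^'n with 'n a finite type, N = CARD('n).\<close>

definition cmat_adj :: "complex^'n^'m \<Rightarrow> complex^'m^'n" where
  "cmat_adj M = (\<chi> i j. cnj (M $ j $ i))"

definition cinner :: "complex^'n \<Rightarrow> complex^'n \<Rightarrow> complex" where
  "cinner x y = (\<Sum>i\<in>UNIV. cnj (x $ i) * y $ i)"

definition hermitian_mat :: "complex^'n^'n \<Rightarrow> bool" where
  "hermitian_mat A \<longleftrightarrow> cmat_adj A = A"

definition pos_def_mat :: "complex^'n^'n \<Rightarrow> bool" where
  "pos_def_mat A \<longleftrightarrow> hermitian_mat A \<and> (\<forall>x. x \<noteq> 0 \<longrightarrow> Re (cinner x (A *v x)) > 0)"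

definition unitary_mat :: "complex^'n^'n \<Rightarrow> bool" where
  "unitary_mat U \<longleftrightarrow> cmat_adj U ** U = mat 1"

definition diag_real :: "('n \<Rightarrow> real) \<Rightarrow> complex^'n^'n" where
  "diag_real d = (\<chi> i j. if i = j then complex_of_real (d i) else 0)"

definition mat_powr :: "complex^'n^'n \<Rightarrow> real \<Rightarrow> complex^'n^'n" where
  "mat_powr A s = (SOME M. \<exists>U d. unitary_mat U \<and> (\<forall>i. d i > 0) \<and>
      A = U ** diag_real d ** cmat_adj U \<and> M = U ** diag_real (\<lambda>i. d i powr s) ** cmat_adj U)"

definition field_of_values :: "complex^'n^'n \<Rightarrow> complex set" where
  "field_of_values M = {cinner x (M *v x) | x. cinner x x = 1}"

text \<open>The theta-method recursion with linear interpolation of the delayed term, for all n \<ge> 0,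
  indices as integers (starting values y_{-m},...,y_0 are unconstrained).\<close>
definition theta_recursion ::
  "complex^'n^'n \<Rightarrow> complex^'n^'n \<Rightarrow> real \<Rightarrow> real \<Rightarrow> nat \<Rightarrow> real \<Rightarrow> (int \<Rightarrow> complex^'n) \<Rightarrow> bool" where
  "theta_recursion A B \<theta> u m h y \<longleftrightarrow> (\<forall>n::int. n \<ge> 0 \<longrightarrow>
     y (n + 1) = y n
       + (h * (1 - \<theta>)) *\<^sub>R (- (A *v y n) + B *v ((1 - u) *\<^sub>R y (n - int m) + u *\<^sub>R y (n - int m + 1)))
       + (h * \<theta>) *\<^sub>R (- (A *v y (n + 1)) + B *v ((1 - u) *\<^sub>R y (n - int m + 1) + u *\<^sub>R y (n - int m + 2))))"

definition theta_stable ::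
  "complex^'n^'n \<Rightarrow> complex^'n^'n \<Rightarrow> real \<Rightarrow> real \<Rightarrow> nat \<Rightarrow> real \<Rightarrow> bool" where
  "theta_stable A B \<theta> u m h \<longleftrightarrow>
     (\<forall>y. theta_recursion A B \<theta> u m h y \<longrightarrow> (\<lambda>n::nat. y (int n)) \<longlonglongrightarrow> 0)"

end

(* Writing the recursion as sum_l L_l y_(n+1-l) = 0 with L_l depending on A, B, theta, h, the
   solutions tend to 0 once the characteristic matrix
     (1 - w) I + h (theta + (1 - theta) w) A - h w^m (theta + (1 - theta) w) B
   is nonsingular for |w| <= 1: by Cramer's rule every component of the generating function of a
   solution is then a rational function whose denominator has no zero in the closed unit disk.
   If v were a kernel vector, set x = A^(p/2) v and pair x with A^(p/2-1) applied to the kernel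
   equation. With c = theta + (1 - theta) w this gives (1 - w) g + h c |x|^2 = h w^m c mu, where
   g = x* A^(-1) x > 0 and |mu| < |x|^2 by the field-of-values hypothesis. After division by c the
   left side has nonnegative real part because Re ((1 - w) / c) >= 0 for theta > 1/2, whereas the
   right side has real part at most h (|mu| - |x|^2) < 0. *)

theory Submission
  imports Defs "HOL-Computational_Algebra.Formal_Laurent_Series"
    "HOL-Computational_Algebra.Fundamental_Theorem_Algebra"
begin

unbundle no Formal_Power_Series.fps_syntax

lemma cinner_add_right: "cinner x (y + z) = cinner x y + cinner x z"
  by (simp add: cinner_def sum.distrib distrib_left)

lemma cinner_add_left: "cinner (x + y) z = cinner x z + cinner y z"
  by (simp add: cinner_def sum.distrib distrib_right)

lemma cinner_diff_right: "cinner x (y - z) = cinner x y - cinner x z"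
  by (simp add: cinner_def sum_subtractf right_diff_distrib)

lemma cinner_smult_right: "cinner x (c *s y) = c * cinner x y"
  by (simp add: cinner_def sum_distrib_left mult.left_commute)

lemma cinner_smult_left: "cinner (c *s x) y = cnj c * cinner x y"
  by (simp add: cinner_def sum_distrib_left mult.assoc)

lemma cinner_scaleR_right: "cinner x (r *\<^sub>R y) = of_real r * cinner x y"
  unfolding cinner_def vector_scaleR_component
  by (simp add: sum_distrib_left scaleR_conv_of_real mult.left_commute)

lemma cinner_scaleR_left: "cinner (r *\<^sub>R x) y = of_real r * cinner x y"
  unfolding cinner_def vector_scaleR_component
  by (simp add: sum_distrib_left scaleR_conv_of_real mult.assoc)

lemma cinner_zero_right [simp]: "cinner x 0 = 0"
  by (simp add: cinner_def)

lemma cinner_sum_right: "cinner x (sum f S) = (\<Sum>i\<in>S. cinner x (f i))"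
  by (induction S rule: infinite_finite_induct) (auto simp: cinner_add_right)

lemma cinner_commute: "cinner y x = cnj (cinner x y)"
  by (simp add: cinner_def mult.commute)

lemma cinner_adj: "cinner x (M *v y) = cinner (cmat_adj M *v x) y"
proof -
  have "cinner x (M *v y) = (\<Sum>i\<in>UNIV. \<Sum>j\<in>UNIV. cnj (x $ i) * (M $ i $ j * y $ j))"
    by (simp add: cinner_def matrix_vector_mult_def sum_distrib_left)
  also have "\<dots> = (\<Sum>j\<in>UNIV. \<Sum>i\<in>UNIV. cnj (x $ i) * (M $ i $ j * y $ j))"
    by (rule sum.swap)
  also have "\<dots> = cinner (cmat_adj M *v x) y"
    by (simp add: cinner_def matrix_vector_mult_def cmat_adj_def sum_distrib_left mult_ac)
  finally show ?thesis .
qed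

lemma hermitian_cinner: "hermitian_mat A \<Longrightarrow> cinner x (A *v y) = cinner (A *v x) y"
  by (simp add: cinner_adj hermitian_mat_def)

lemma cinner_self_norm: "cinner x x = of_real ((norm x)\<^sup>2)"
proof -
  have "cnj (x $ i) * x $ i = of_real ((cmod (x $ i))\<^sup>2)" for i
    using complex_norm_square[of "x $ i"] by (simp add: mult.commute)
  then have "cinner x x = of_real (\<Sum>i\<in>UNIV. (cmod (x $ i))\<^sup>2)"
    by (simp add: cinner_def of_real_sum)
  then show ?thesis
    by (simp add: norm_vec_def L2_set_def sum_nonneg)
qed

lemma cinner_self_eq_0 [simp]: "cinner x x = 0 \<longleftrightarrow> x = 0"
  by (simp add: cinner_self_norm)

lemma cinner_scaleR_quadratic_form:
  "cinner (r *\<^sub>R x) (A *v (r *\<^sub>R x)) = of_real (r\<^sup>2) * cinner x (A *v x)"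
  by (simp add: linear_cmul[OF matrix_vector_mul_linear] cinner_scaleR_left cinner_scaleR_right
      power2_eq_square)

lemma continuous_on_quadratic_form: "continuous_on S (\<lambda>x. Re (cinner x (A *v x)))"
  unfolding cinner_def matrix_vector_mult_def vec_lambda_beta by (intro continuous_intros)

lemma scaleR_eq_smult: "r *\<^sub>R (x :: complex^'n) = complex_of_real r *s x"
  unfolding vec_eq_iff vector_scaleR_component by (simp add: scaleR_conv_of_real)

lemma scaleR_matrix_vector_mult: "(r *\<^sub>R M) *v (z :: 'a::real_algebra_1^'n) = r *\<^sub>R (M *v z)"
  unfolding vec_eq_iff matrix_vector_mult_def vector_scaleR_component
  by (simp add: scaleR_sum_right)

lemma uminus_matrix_vector_mult: "(- M) *v (z :: 'a::ring_1^'n) = - (M *v z)"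
  by (simp add: vec_eq_iff matrix_vector_mult_def sum_negf)

definition orthonormal_eigvecs ::
  "complex^'n^'n \<Rightarrow> 'n set \<Rightarrow> ('n \<Rightarrow> complex^'n) \<Rightarrow> ('n \<Rightarrow> real) \<Rightarrow> bool" where
  "orthonormal_eigvecs A K e d \<longleftrightarrow>
     (\<forall>i\<in>K. \<forall>j\<in>K. cinner (e i) (e j) = (if i = j then 1 else 0)) \<and>
     (\<forall>i\<in>K. A *v e i = complex_of_real (d i) *s e i)"

lemma exists_nonzero_orthogonal:
  fixes e :: "'n \<Rightarrow> complex^'n"
  assumes fin: "finite K" and card: "card K < CARD('n)"
    and orth: "\<forall>i\<in>K. \<forall>j\<in>K. cinner (e i) (e j) = (if i = j then 1 else 0)"
  shows "\<exists>w. w \<noteq> 0 \<and> (\<forall>i\<in>K. cinner (e i) w = 0)"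
proof -
  have "vec.span (e ` K) \<noteq> UNIV"
  proof
    assume span: "vec.span (e ` K) = UNIV"
    have "CARD('n) = vec.dim (UNIV :: (complex^'n) set)" by (rule vec_dim_card[symmetric])
    also have "\<dots> = vec.dim (e ` K)" using span vec.dim_span by metis
    also have "\<dots> \<le> card K" using fin vec.dim_le_card' card_image_le le_trans by blast
    finally show False using card by simp
  qed
  then obtain z where z: "z \<notin> vec.span (e ` K)" by blast
  define w where "w = z - (\<Sum>i\<in>K. cinner (e i) z *s e i)"
  have "(\<Sum>i\<in>K. cinner (e i) z *s e i) \<in> vec.span (e ` K)"
    by (intro vec.span_sum vec.span_scale vec.span_base) auto
  then have "w \<noteq> 0" using z by (auto simp: w_def)
  moreover have "cinner (e j) w = 0" if j: "j \<in> K" for j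
  proof -
    have "(\<Sum>i\<in>K. cinner (e i) z * cinner (e j) (e i)) = (\<Sum>i\<in>K. if j = i then cinner (e i) z else 0)"
      by (rule sum.cong) (use orth j in auto)
    then show ?thesis
      using fin j by (simp add: w_def cinner_diff_right cinner_sum_right cinner_smult_right)
  qed
  ultimately show ?thesis by blast
qed

lemma linear_coeff_eq_0_if_nonpos:
  fixes a b :: real
  assumes "\<forall>t. a * t + b * t\<^sup>2 \<le> 0"
  shows "a = 0"
proof (rule ccontr)
  assume a: "a \<noteq> 0"
  define c where "c = 2 * (\<bar>b\<bar> + 1)"
  have c: "c > 0" "c - \<bar>b\<bar> > 0" unfolding c_def by auto
  define t where "t = a / c"
  have "a * t + b * t\<^sup>2 \<le> 0" using assms by simp
  moreover have "b * t\<^sup>2 \<ge> - \<bar>b\<bar> * t\<^sup>2"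
    by (rule mult_right_mono) auto
  moreover have "a * t - \<bar>b\<bar> * t\<^sup>2 = a\<^sup>2 * (c - \<bar>b\<bar>) / c\<^sup>2"
    unfolding t_def using c(1) by (simp add: power2_eq_square divide_simps) (simp add: algebra_simps)
  moreover have "a\<^sup>2 * (c - \<bar>b\<bar>) / c\<^sup>2 > 0"
    using a c by (intro divide_pos_pos mult_pos_pos) auto
  ultimately show False by linarith
qed

text \<open>First-order condition for a maximiser of the Rayleigh quotient: along \<open>x + t y\<close> the
  bound becomes a polynomial in \<open>t\<close> that is nonpositive, so its linear coefficient vanishes.\<close>

lemma hermitian_rayleigh_max_orthogonal:
  fixes A :: "complex^'n^'n"
  assumes herm: "hermitian_mat A" and W: "vec.subspace W" and x: "x \<in> W"
    and le: "\<And>z. z \<in> W \<Longrightarrow> Re (cinner z (A *v z)) \<le> l * (norm z)\<^sup>2"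
    and eq: "Re (cinner x (A *v x)) = l * (norm x)\<^sup>2"
    and y: "y \<in> W"
  shows "cinner y (A *v x - complex_of_real l *s x) = 0"
proof -
  define q where "q z = Re (cinner z (A *v z))" for z
  have Re_variation: "Re (cinner z (A *v x - complex_of_real l *s x)) = 0" if z: "z \<in> W" for z
  proof -
    have sym_A: "Re (cinner x (A *v z)) = Re (cinner z (A *v x))"
      using hermitian_cinner[OF herm, of x z] cinner_commute[of "A *v x" z] by simp
    have sym: "Re (cinner x z) = Re (cinner z x)"
      using cinner_commute[of x z] by simp
    have "\<forall>t. (2 * (Re (cinner z (A *v x)) - l * Re (cinner z x))) * t
              + (q z - l * (norm z)\<^sup>2) * t\<^sup>2 \<le> 0"
    proof
      fix t :: real
      have "x + t *\<^sub>R z \<in> W"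
        using W x z by (simp add: scaleR_eq_smult vec.subspace_add vec.subspace_scale)
      then have "q (x + t *\<^sub>R z) \<le> l * (norm (x + t *\<^sub>R z))\<^sup>2"
        using le by (simp add: q_def)
      moreover have "q (x + t *\<^sub>R z) = q x + 2 * t * Re (cinner z (A *v x)) + t\<^sup>2 * q z"
        using sym_A by (simp add: q_def matrix_vector_right_distrib linear_cmul[OF matrix_vector_mul_linear]
            cinner_add_left cinner_add_right cinner_scaleR_left cinner_scaleR_right power2_eq_square algebra_simps)
      moreover have "Re (cinner (x + t *\<^sub>R z) (x + t *\<^sub>R z))
          = Re (cinner x x) + 2 * t * Re (cinner z x) + t\<^sup>2 * Re (cinner z z)"
        using sym by (simp add: cinner_add_left cinner_add_right cinner_scaleR_left cinner_scaleR_right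
            power2_eq_square algebra_simps)
      ultimately show "(2 * (Re (cinner z (A *v x)) - l * Re (cinner z x))) * t
              + (q z - l * (norm z)\<^sup>2) * t\<^sup>2 \<le> 0"
        using eq by (simp add: q_def cinner_self_norm algebra_simps)
    qed
    from linear_coeff_eq_0_if_nonpos[OF this] show ?thesis
      by (simp add: cinner_diff_right cinner_smult_right)
  qed
  have "Re (cinner (\<i> *s y) (A *v x - complex_of_real l *s x)) = 0"
    using Re_variation W y vec.subspace_scale by blast
  then have "Im (cinner y (A *v x - complex_of_real l *s x)) = 0"
    by (simp add: cinner_smult_left)
  with Re_variation[OF y] show ?thesis by (simp add: complex_eq_iff)
qed

lemma hermitian_invariant_subspace_eigvec:
  fixes A :: "complex^'n^'n"
  assumes herm: "hermitian_mat A" and W: "vec.subspace W" "closed W"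
    and w: "w \<in> W" "w \<noteq> 0" and inv: "\<And>z. z \<in> W \<Longrightarrow> A *v z \<in> W"
  shows "\<exists>x l. x \<in> W \<and> cinner x x = 1 \<and> A *v x = complex_of_real l *s x"
proof -
  define q where "q z = Re (cinner z (A *v z))" for z
  define S where "S = sphere 0 1 \<inter> W"
  have unit: "(1 / norm z) *\<^sub>R z \<in> S" if "z \<in> W" "z \<noteq> 0" for z
  proof -
    have "(1 / norm z) *\<^sub>R z \<in> W" using that W(1) by (simp add: scaleR_eq_smult vec.subspace_scale)
    then show ?thesis using that by (simp add: S_def)
  qed
  have "compact S" unfolding S_def using W(2) by (intro compact_Int_closed) auto
  moreover have "S \<noteq> {}" using unit w by blast
  ultimately obtain x where xS: "x \<in> S" and max: "\<And>y. y \<in> S \<Longrightarrow> q y \<le> q x"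
    using continuous_attains_sup[OF _ _ continuous_on_quadratic_form[of S A]]
    unfolding q_def by blast
  have x: "x \<in> W" "norm x = 1" using xS by (auto simp: S_def)
  have le: "q z \<le> q x * (norm z)\<^sup>2" if "z \<in> W" for z
  proof (cases "z = 0")
    case False
    then have "q ((1 / norm z) *\<^sub>R z) \<le> q x" using max unit that by blast
    moreover have "q ((1 / norm z) *\<^sub>R z) = q z / (norm z)\<^sup>2"
      by (simp add: q_def cinner_scaleR_quadratic_form power_divide)
    ultimately show ?thesis using False by (simp add: divide_le_eq mult.commute)
  qed (simp add: q_def)
  define u where "u = A *v x - complex_of_real (q x) *s x"
  have "u \<in> W" unfolding u_def using W(1) x(1) inv by (simp add: vec.subspace_diff vec.subspace_scale)
  then have "cinner u u = 0"
    using hermitian_rayleigh_max_orthogonal[OF herm W(1) x(1), of "q x"] le x(2)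
    unfolding u_def q_def by simp
  then have "A *v x = complex_of_real (q x) *s x" by (simp add: u_def)
  moreover have "cinner x x = 1" using x(2) by (simp add: cinner_self_norm)
  ultimately show ?thesis using x(1) by blast
qed

lemma hermitian_orthonormal_eigvecs:
  fixes A :: "complex^'n^'n"
  assumes herm: "hermitian_mat A" and fin: "finite K"
  shows "\<exists>e d. orthonormal_eigvecs A K e d"
  using fin
proof (induction K rule: finite_induct)
  case empty then show ?case by (simp add: orthonormal_eigvecs_def)
next
  case (insert a K)
  then obtain e d where ed: "orthonormal_eigvecs A K e d" by blast
  then have orth: "\<forall>i\<in>K. \<forall>j\<in>K. cinner (e i) (e j) = (if i = j then 1 else 0)"
    and eig: "\<And>i. i \<in> K \<Longrightarrow> A *v e i = complex_of_real (d i) *s e i"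
    by (auto simp: orthonormal_eigvecs_def)
  define W where "W = (\<Inter>i\<in>K. {z. cinner (e i) z = 0})"
  have sub: "vec.subspace W"
    unfolding W_def
    by (intro vec.subspace_Int vec.subspaceI) (auto simp: cinner_add_right cinner_smult_right)
  have closed: "closed W"
  proof -
    have "continuous_on UNIV (\<lambda>z. cinner (e i) z)" for i
      unfolding cinner_def by (intro continuous_intros)
    then show ?thesis
      unfolding W_def using continuous_closed_preimage_constant[of UNIV] by (intro closed_INT) auto
  qed
  have "card K < CARD('n)"
    using insert.hyps by (intro psubset_card_mono) auto
  then obtain w where w: "w \<in> W" "w \<noteq> 0"
    using exists_nonzero_orthogonal[OF insert.hyps(1) _ orth] by (auto simp: W_def)
  have inv: "A *v z \<in> W" if "z \<in> W" for z
    using that eig by (auto simp: W_def hermitian_cinner[OF herm] cinner_smult_left)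
  obtain x l where x: "x \<in> W" "cinner x x = 1" "A *v x = complex_of_real l *s x"
    using hermitian_invariant_subspace_eigvec[OF herm sub closed w inv] by blast
  have "\<forall>i\<in>K. cinner x (e i) = 0"
    using x(1) by (auto simp: W_def cinner_commute[of x])
  then have "orthonormal_eigvecs A (insert a K) (e(a := x)) (d(a := l))"
    using ed x insert.hyps(2) by (auto simp: orthonormal_eigvecs_def W_def)
  then show ?case by blast
qed

lemma pos_def_eigval_pos:
  assumes "pos_def_mat A" "x \<noteq> 0" "A *v x = complex_of_real l *s x"
  shows "l > 0"
proof -
  have "Re (cinner x (A *v x)) = l * (norm x)\<^sup>2"
    using assms(3) by (simp add: cinner_smult_right cinner_self_norm)
  then show ?thesis
    using assms(1,2) by (auto simp: pos_def_mat_def zero_less_mult_iff)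
qed

lemma matrix_mult_diag_real_nth: "(M ** diag_real f) $ i $ j = M $ i $ j * complex_of_real (f j)"
proof -
  have "(M ** diag_real f) $ i $ j = (\<Sum>k\<in>UNIV. if k = j then M $ i $ k * complex_of_real (f k) else 0)"
    unfolding matrix_matrix_mult_def diag_real_def vec_lambda_beta by (rule sum.cong) auto
  then show ?thesis by simp
qed

lemma diag_real_mult_matrix_nth: "(diag_real f ** M) $ i $ j = complex_of_real (f i) * M $ i $ j"
proof -
  have "(diag_real f ** M) $ i $ j = (\<Sum>k\<in>UNIV. if k = i then complex_of_real (f k) * M $ k $ j else 0)"
    unfolding matrix_matrix_mult_def diag_real_def vec_lambda_beta by (rule sum.cong) auto
  then show ?thesis by simp
qed

lemma diag_real_mult: "diag_real f ** diag_real g = diag_real (\<lambda>i. f i * g i)"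
  unfolding vec_eq_iff matrix_mult_diag_real_nth by (simp add: diag_real_def)

lemma diag_real_one: "diag_real (\<lambda>i. 1) = mat 1"
  by (simp add: diag_real_def mat_def vec_eq_iff)

lemma unitary_mat_right_inverse: "unitary_mat U \<Longrightarrow> U ** cmat_adj U = mat 1"
  unfolding unitary_mat_def using matrix_left_right_inverse by blast

lemma orthonormal_eigvecs_diagonalize:
  fixes A :: "complex^'n^'n"
  assumes "orthonormal_eigvecs A UNIV e d"
  defines "U \<equiv> \<chi> i j. e j $ i"
  shows "unitary_mat U" and "A = U ** diag_real d ** cmat_adj U"
proof -
  have orth: "\<And>i j. cinner (e i) (e j) = (if i = j then 1 else 0)"
    and eig: "\<And>i. A *v e i = complex_of_real (d i) *s e i"
    using assms(1) unfolding orthonormal_eigvecs_def by auto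
  have "(cmat_adj U ** U) $ i $ j = cinner (e i) (e j)" for i j
    unfolding U_def cmat_adj_def matrix_matrix_mult_def cinner_def vec_lambda_beta ..
  then show unitary: "unitary_mat U"
    unfolding unitary_mat_def orth by (simp add: vec_eq_iff mat_def)
  have "(A ** U) $ i $ j = (A *v e j) $ i" for i j
    unfolding U_def matrix_matrix_mult_def matrix_vector_mult_def vec_lambda_beta ..
  then have AU: "A ** U = U ** diag_real d"
    unfolding vec_eq_iff matrix_mult_diag_real_nth eig by (simp add: U_def mult.commute)
  have "A = A ** (U ** cmat_adj U)"
    by (simp add: unitary_mat_right_inverse[OF unitary])
  also have "\<dots> = (A ** U) ** cmat_adj U"
    by (rule matrix_mul_assoc)
  finally show "A = U ** diag_real d ** cmat_adj U"
    unfolding AU .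
qed

lemma pos_def_spectral_decomposition:
  fixes A :: "complex^'n^'n"
  assumes "pos_def_mat A"
  shows "\<exists>U d. unitary_mat U \<and> (\<forall>i. d i > 0) \<and> A = U ** diag_real d ** cmat_adj U"
proof -
  obtain e d where ed: "orthonormal_eigvecs A UNIV e d"
    using assms hermitian_orthonormal_eigvecs[of A UNIV] by (auto simp: pos_def_mat_def)
  have "d i > 0" for i
  proof (rule pos_def_eigval_pos[OF assms])
    have "cinner (e i) (e i) = 1" using ed by (simp add: orthonormal_eigvecs_def)
    then show "e i \<noteq> 0" by auto
    show "A *v e i = complex_of_real (d i) *s e i" using ed by (simp add: orthonormal_eigvecs_def)
  qed
  then show ?thesis using orthonormal_eigvecs_diagonalize[OF ed] by blast
qed

definition spectral_powr :: "complex^'n^'n \<Rightarrow> ('n \<Rightarrow> real) \<Rightarrow> real \<Rightarrow> complex^'n^'n" where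
  "spectral_powr U d s = U ** diag_real (\<lambda>i. d i powr s) ** cmat_adj U"

lemma spectral_powr_add:
  assumes U: "unitary_mat U"
  shows "spectral_powr U d a ** spectral_powr U d b = spectral_powr U d (a + b)"
proof -
  have "spectral_powr U d a ** spectral_powr U d b =
     U ** (diag_real (\<lambda>i. d i powr a) ** ((cmat_adj U ** U) ** diag_real (\<lambda>i. d i powr b))) ** cmat_adj U"
    unfolding spectral_powr_def by (simp add: matrix_mul_assoc)
  then show ?thesis
    using U unfolding unitary_mat_def spectral_powr_def by (simp add: diag_real_mult powr_add)
qed

lemma spectral_powr_0:
  assumes "unitary_mat U" "\<forall>i. d i > 0"
  shows "spectral_powr U d 0 = mat 1"
  using assms unitary_mat_right_inverse[OF assms(1)]
  by (simp add: spectral_powr_def diag_real_one less_imp_neq[symmetric])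

lemma spectral_powr_1:
  assumes "\<forall>i. d i > 0"
  shows "spectral_powr U d 1 = U ** diag_real d ** cmat_adj U"
proof -
  have "(\<lambda>i. d i powr 1) = d" using assms by (simp add: fun_eq_iff less_imp_le)
  then show ?thesis by (simp add: spectral_powr_def)
qed

text \<open>Real powers do not depend on the chosen eigendecomposition: the matrix intertwining two
  decompositions only connects eigenvectors of equal eigenvalue.\<close>

lemma spectral_powr_unique:
  assumes U: "unitary_mat U" and V: "unitary_mat V"
    and eq: "U ** diag_real d ** cmat_adj U = V ** diag_real e ** cmat_adj V"
  shows "spectral_powr U d s = spectral_powr V e s"
proof -
  have UU: "cmat_adj U ** U = mat 1" and VV: "cmat_adj V ** V = mat 1"
    using U V unfolding unitary_mat_def by auto
  define W where "W = cmat_adj V ** U"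
  have "cmat_adj V ** (U ** diag_real d ** cmat_adj U) ** U = W ** diag_real d ** (cmat_adj U ** U)"
    and "cmat_adj V ** (V ** diag_real e ** cmat_adj V) ** U = (cmat_adj V ** V) ** diag_real e ** W"
    unfolding W_def by (simp_all add: matrix_mul_assoc)
  then have "W ** diag_real d = diag_real e ** W"
    using eq UU VV by simp
  then have "W $ i $ j = 0 \<or> d j = e i" for i j
    unfolding vec_eq_iff matrix_mult_diag_real_nth diag_real_mult_matrix_nth
    by (metis mult.commute mult_cancel_left of_real_eq_iff)
  then have WDs: "W ** diag_real (\<lambda>i. d i powr s) = diag_real (\<lambda>i. e i powr s) ** W"
    unfolding vec_eq_iff matrix_mult_diag_real_nth diag_real_mult_matrix_nth
    by (metis mult.commute mult_zero_left mult_zero_right)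
  have "spectral_powr U d s = (V ** cmat_adj V) ** U ** diag_real (\<lambda>i. d i powr s) ** cmat_adj U"
    by (simp add: spectral_powr_def unitary_mat_right_inverse[OF V])
  also have "\<dots> = V ** (W ** diag_real (\<lambda>i. d i powr s)) ** cmat_adj U"
    unfolding W_def by (simp add: matrix_mul_assoc)
  also have "\<dots> = V ** diag_real (\<lambda>i. e i powr s) ** (W ** cmat_adj U)"
    unfolding WDs by (simp add: matrix_mul_assoc)
  also have "W ** cmat_adj U = cmat_adj V"
    unfolding W_def by (simp add: matrix_mul_assoc[symmetric] unitary_mat_right_inverse[OF U])
  finally show ?thesis unfolding spectral_powr_def .
qed

lemma mat_powr_eq_spectral_powr:
  assumes U: "unitary_mat U" and d: "\<forall>i. d i > 0" and A: "A = U ** diag_real d ** cmat_adj U"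
  shows "mat_powr A s = spectral_powr U d s"
proof -
  let ?P = "\<lambda>M. \<exists>U d. unitary_mat U \<and> (\<forall>i. d i > 0) \<and>
      A = U ** diag_real d ** cmat_adj U \<and> M = U ** diag_real (\<lambda>i. d i powr s) ** cmat_adj U"
  have "?P (spectral_powr U d s)" using U d A unfolding spectral_powr_def by blast
  then have "?P (mat_powr A s)" unfolding mat_powr_def by (rule someI)
  then obtain V e where V: "unitary_mat V" "A = V ** diag_real e ** cmat_adj V"
    and M: "mat_powr A s = V ** diag_real (\<lambda>i. e i powr s) ** cmat_adj V" by blast
  show ?thesis
    using spectral_powr_unique[OF V(1) U] V(2) A M by (simp add: spectral_powr_def)
qed

lemma cinner_diag_real: "cinner y (diag_real f *v y) = of_real (\<Sum>i\<in>UNIV. f i * (cmod (y $ i))\<^sup>2)"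
proof -
  have "(diag_real f *v y) $ i = complex_of_real (f i) * y $ i" for i
  proof -
    have "(diag_real f *v y) $ i = (\<Sum>k\<in>UNIV. if k = i then complex_of_real (f k) * y $ k else 0)"
      unfolding matrix_vector_mult_def diag_real_def vec_lambda_beta by (rule sum.cong) auto
    then show ?thesis by simp
  qed
  then have "cinner y (diag_real f *v y) = (\<Sum>i\<in>UNIV. complex_of_real (f i) * (cnj (y $ i) * y $ i))"
    unfolding cinner_def by (simp add: mult_ac)
  also have "\<dots> = (\<Sum>i\<in>UNIV. complex_of_real (f i * (cmod (y $ i))\<^sup>2))"
  proof (rule sum.cong)
    fix i
    have "complex_of_real ((cmod (y $ i))\<^sup>2) = y $ i * cnj (y $ i)" by (rule complex_norm_square)
    then show "complex_of_real (f i) * (cnj (y $ i) * y $ i) = complex_of_real (f i * (cmod (y $ i))\<^sup>2)"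
      by (simp add: mult.commute)
  qed simp
  finally show ?thesis by simp
qed

lemma spectral_powr_quadratic_form_pos:
  assumes U: "unitary_mat U" and d: "\<forall>i. d i > 0" and x: "x \<noteq> 0"
  shows "\<exists>g > 0. cinner x (spectral_powr U d a *v x) = complex_of_real g"
proof -
  define y where "y = cmat_adj U *v x"
  have "U *v y = x" unfolding y_def matrix_vector_mul_assoc unitary_mat_right_inverse[OF U] by simp
  then have "y \<noteq> 0" using x by auto
  then obtain k where k: "y $ k \<noteq> 0" by (auto simp: vec_eq_iff)
  have "cinner x (spectral_powr U d a *v x) = cinner y (diag_real (\<lambda>i. d i powr a) *v y)"
    unfolding spectral_powr_def y_def by (simp add: matrix_vector_mul_assoc[symmetric] cinner_adj)
  also have "\<dots> = of_real (\<Sum>i\<in>UNIV. d i powr a * (cmod (y $ i))\<^sup>2)" by (rule cinner_diag_real)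
  finally have eq: "cinner x (spectral_powr U d a *v x) = of_real (\<Sum>i\<in>UNIV. d i powr a * (cmod (y $ i))\<^sup>2)" .
  have "0 < d k powr a * (cmod (y $ k))\<^sup>2" using d[rule_format, of k] k by simp
  also have "\<dots> \<le> (\<Sum>i\<in>UNIV. d i powr a * (cmod (y $ i))\<^sup>2)"
    by (rule member_le_sum) auto
  finally show ?thesis using eq by blast
qed

lemma theta_weight_Re_pos:
  fixes w :: complex and \<theta> :: real
  assumes "cmod w \<le> 1" "1/2 < \<theta>" "\<theta> \<le> 1"
  shows "Re (of_real \<theta> + of_real (1 - \<theta>) * w) > 0"
proof -
  have "- 1 \<le> Re w" using abs_Re_le_cmod[of w] assms(1) by linarith
  then have "- (1 - \<theta>) \<le> (1 - \<theta>) * Re w" using assms(3) mult_left_mono[of "- 1" "Re w" "1 - \<theta>"] by simp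
  then show ?thesis using assms(2) by simp
qed

text \<open>This is where \<open>\<theta> > 1/2\<close> enters: the map \<open>w \<mapsto> (1 - w) / (\<theta> + (1 - \<theta>) w)\<close> sends the closed
  unit disk into the closed right half-plane.\<close>

lemma theta_ratio_Re_nonneg:
  fixes w :: complex and \<theta> :: real
  assumes w: "cmod w \<le> 1" and \<theta>: "1/2 < \<theta>" "\<theta> \<le> 1"
  shows "Re ((1 - w) / (of_real \<theta> + of_real (1 - \<theta>) * w)) \<ge> 0"
proof -
  define a where "a = Re w"
  define b where "b = Im w"
  have ab: "a\<^sup>2 + b\<^sup>2 \<le> 1"
    using w unfolding a_def b_def cmod_power2[symmetric] by (simp add: power_le_one)
  have "a \<le> 1" using abs_Re_le_cmod[of w] w unfolding a_def by linarith
  have "(1 - \<theta>) * b\<^sup>2 \<le> (1 - \<theta>) * (1 - a\<^sup>2)" using ab \<theta> by (intro mult_left_mono) auto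
  moreover have "(1 - a) * (\<theta> + (1 - \<theta>) * a) - (1 - \<theta>) * (1 - a\<^sup>2) = (1 - a) * (2 * \<theta> - 1)"
    by (simp add: power2_eq_square algebra_simps)
  moreover have "(1 - a) * (2 * \<theta> - 1) \<ge> 0" using \<open>a \<le> 1\<close> \<theta> by simp
  ultimately have "(1 - a) * (\<theta> + (1 - \<theta>) * a) - (1 - \<theta>) * b\<^sup>2 \<ge> 0" by linarith
  moreover have "Re (1 - w) * Re (of_real \<theta> + of_real (1 - \<theta>) * w)
      + Im (1 - w) * Im (of_real \<theta> + of_real (1 - \<theta>) * w)
      = (1 - a) * (\<theta> + (1 - \<theta>) * a) - (1 - \<theta>) * b\<^sup>2"
    by (simp add: a_def b_def power2_eq_square algebra_simps)
  ultimately show ?thesis unfolding Re_divide by simp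
qed

lemma theta_characteristic_scalar_absurd:
  fixes w \<mu> :: complex and g n h \<theta> :: real and m :: nat
  assumes w: "cmod w \<le> 1" and \<theta>: "1/2 < \<theta>" "\<theta> \<le> 1" and h: "h > 0" and g: "g > 0"
    and \<mu>: "cmod \<mu> < n"
    and eq: "(1 - w) * of_real g + of_real h * (of_real \<theta> + of_real (1 - \<theta>) * w) * of_real n
             = of_real h * w ^ m * (of_real \<theta> + of_real (1 - \<theta>) * w) * \<mu>"
  shows False
proof -
  define c where "c = complex_of_real \<theta> + complex_of_real (1 - \<theta>) * w"
  have "Re c > 0" unfolding c_def by (rule theta_weight_Re_pos[OF w \<theta>])
  then have "c \<noteq> 0" by auto
  moreover have "(1 - w) * of_real g = c * (of_real h * w ^ m * \<mu> - of_real (h * n))"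
    using eq unfolding c_def by (simp add: algebra_simps)
  ultimately have "(1 - w) / c * of_real g = of_real h * w ^ m * \<mu> - of_real (h * n)"
    by (simp add: field_simps)
  have "0 \<le> Re ((1 - w) / c) * g"
    using theta_ratio_Re_nonneg[OF w \<theta>] g unfolding c_def by simp
  also have "\<dots> = Re ((1 - w) / c * of_real g)"
    by (simp only: times_complex.sel Re_complex_of_real Im_complex_of_real mult_zero_right diff_zero)
  also have "\<dots> = Re (of_real h * w ^ m * \<mu>) - h * n"
    unfolding \<open>(1 - w) / c * of_real g = _\<close> by simp
  finally have "h * n \<le> Re (of_real h * w ^ m * \<mu>)" by simp
  also have "\<dots> \<le> cmod (of_real h * w ^ m * \<mu>)"
    by (rule complex_Re_le_cmod)
  also have "\<dots> = h * cmod w ^ m * cmod \<mu>"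
    using h by (simp add: norm_mult norm_power)
  also have "\<dots> \<le> h * cmod \<mu>"
    using h w by (simp add: mult_left_le_one_le power_le_one)
  also have "\<dots> < h * n" using h \<mu> by simp
  finally show False by simp
qed

lemma field_of_values_in_unit_ball_bound:
  assumes "field_of_values M \<subseteq> ball 0 1" "x \<noteq> 0"
  shows "cmod (cinner x (M *v x)) < (norm x)\<^sup>2"
proof -
  define x' where "x' = (1 / norm x) *\<^sub>R x"
  have "cinner x' x' = 1"
    using assms(2) by (simp add: x'_def cinner_scaleR_left cinner_scaleR_right cinner_self_norm
        power2_eq_square)
  then have "cinner x' (M *v x') \<in> ball 0 1"
    using assms(1) unfolding field_of_values_def by blast
  moreover have "cinner x' (M *v x') = of_real ((1 / norm x)\<^sup>2) * cinner x (M *v x)"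
    unfolding x'_def by (rule cinner_scaleR_quadratic_form)
  ultimately have "\<bar>(1 / norm x)\<^sup>2\<bar> * cmod (cinner x (M *v x)) < 1"
    by (simp only: mem_ball_0 norm_mult norm_of_real)
  then show ?thesis
    using assms(2) by (simp add: field_simps)
qed

text \<open>The kernel equation multiplied by \<open>A^(p/2 - 1)\<close> and paired with \<open>x = A^(p/2) v\<close>;
  then \<open>g = x* A^(-1) x\<close>.\<close>

lemma mat_powr_pairing:
  fixes A B :: "complex^'n^'n" and a b c :: complex and p :: real
  assumes pd: "pos_def_mat A" and "v \<noteq> 0"
    and eq: "c *s v + a *s (A *v v) = b *s (B *v v)"
  shows "\<exists>x g. x \<noteq> 0 \<and> g > 0 \<and>
    c * of_real g + a * of_real ((norm x)\<^sup>2)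
      = b * cinner x ((mat_powr A (p/2 - 1) ** B ** mat_powr A (- p/2)) *v x)"
proof -
  obtain U d where U: "unitary_mat U" and d: "\<forall>i. d i > 0" and A: "A = U ** diag_real d ** cmat_adj U"
    using pos_def_spectral_decomposition[OF pd] by blast
  define P where "P s = spectral_powr U d s" for s
  have PP: "P s ** P t = P (s + t)" for s t
    unfolding P_def by (rule spectral_powr_add[OF U])
  have P0: "P 0 = mat 1" unfolding P_def by (rule spectral_powr_0[OF U d])
  have P1: "P 1 = A" unfolding P_def A by (rule spectral_powr_1[OF d])
  define M where "M = P (p/2 - 1) ** B ** P (- p/2)"
  define x where "x = P (p/2) *v v"
  have v: "v = P (- p/2) *v x"
    unfolding x_def matrix_vector_mul_assoc PP by (simp add: P0)
  then have "x \<noteq> 0" using \<open>v \<noteq> 0\<close> by auto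
  then obtain g where g: "g > 0" "cinner x (P (- 1) *v x) = complex_of_real g"
    using spectral_powr_quadratic_form_pos[OF U d] unfolding P_def by blast
  have "P (p/2 - 1) *v v = P (- 1) *v x"
    unfolding v matrix_vector_mul_assoc PP by simp
  moreover have "P (p/2 - 1) *v (A *v v) = x"
    unfolding v matrix_vector_mul_assoc P1[symmetric] PP by (simp add: P0)
  moreover have "P (p/2 - 1) *v (B *v v) = M *v x"
    unfolding v M_def matrix_vector_mul_assoc by (simp add: matrix_mul_assoc)
  moreover have "P (p/2 - 1) *v (c *s v + a *s (A *v v)) = P (p/2 - 1) *v (b *s (B *v v))"
    using eq by simp
  ultimately have "c *s (P (- 1) *v x) + a *s x = b *s (M *v x)"
    unfolding matrix_vector_right_distrib vector_scalar_commute by simp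
  then have "cinner x (c *s (P (- 1) *v x) + a *s x) = cinner x (b *s (M *v x))"
    by simp
  then have "c * of_real g + a * of_real ((norm x)\<^sup>2) = b * cinner x (M *v x)"
    unfolding cinner_add_right cinner_smult_right g cinner_self_norm .
  then show ?thesis
    using \<open>x \<noteq> 0\<close> g(1) unfolding M_def P_def mat_powr_eq_spectral_powr[OF U d A] by blast
qed

lemma theta_characteristic_kernel_trivial:
  fixes A B :: "complex^'n^'n" and w :: complex and \<theta> h p :: real and m :: nat
  assumes pd: "pos_def_mat A" and \<theta>: "1/2 < \<theta>" "\<theta> \<le> 1" and h: "h > 0" and w: "cmod w \<le> 1"
    and F: "field_of_values (mat_powr A (p/2 - 1) ** B ** mat_powr A (- p/2)) \<subseteq> ball 0 1"
    and eq: "(1 - w) *s v + (of_real h * (of_real \<theta> + of_real (1 - \<theta>) * w)) *s (A *v v)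
             = (of_real h * w ^ m * (of_real \<theta> + of_real (1 - \<theta>) * w)) *s (B *v v)"
  shows "v = 0"
proof (rule ccontr)
  assume "v \<noteq> 0"
  with mat_powr_pairing[OF pd _ eq, of p] obtain x g where "x \<noteq> 0" "g > 0"
    and "(1 - w) * of_real g + of_real h * (of_real \<theta> + of_real (1 - \<theta>) * w) * of_real ((norm x)\<^sup>2)
      = of_real h * w ^ m * (of_real \<theta> + of_real (1 - \<theta>) * w)
          * cinner x ((mat_powr A (p/2 - 1) ** B ** mat_powr A (- p/2)) *v x)"
    by blast
  then show False
    using theta_characteristic_scalar_absurd[OF w \<theta> h] field_of_values_in_unit_ball_bound[OF F] by blast
qed



lemma contractive_recurrence_tendsto_zero:
  fixes a b :: "nat \<Rightarrow> 'a::real_normed_div_algebra" and c :: 'a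
  assumes c: "norm c < 1" and b: "b \<longlonglongrightarrow> 0" and rec: "\<And>n. a (Suc n) = c * a n + b n"
  shows "a \<longlonglongrightarrow> 0"
proof (rule LIMSEQ_I)
  fix e :: real assume e: "e > 0"
  define r where "r = norm c"
  have r: "0 \<le> r" "r < 1" using c by (auto simp: r_def)
  then obtain N where N: "\<And>n. n \<ge> N \<Longrightarrow> norm (b n) < e * (1 - r) / 2"
    using LIMSEQ_D[OF b, of "e * (1 - r) / 2"] e by auto
  have bound: "norm (a (N + k)) \<le> r ^ k * norm (a N) + e / 2" for k
  proof (induction k)
    case (Suc k)
    have "norm (a (N + Suc k)) \<le> r * norm (a (N + k)) + norm (b (N + k))"
      unfolding r_def by (simp add: rec norm_mult[symmetric] norm_triangle_ineq)
    also have "\<dots> \<le> r * (r ^ k * norm (a N) + e / 2) + e * (1 - r) / 2"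
      using Suc.IH N[of "N + k"] r by (intro add_mono mult_left_mono) auto
    also have "\<dots> = r ^ Suc k * norm (a N) + e / 2" by (simp add: field_simps)
    finally show ?case .
  qed (use e in simp)
  have "(\<lambda>k. r ^ k * norm (a N)) \<longlonglongrightarrow> 0"
    using LIMSEQ_power_zero[of r] r by (intro tendsto_mult_left_zero) auto
  then obtain K where K: "\<And>k. k \<ge> K \<Longrightarrow> r ^ k * norm (a N) < e / 2"
    using LIMSEQ_D[of _ 0 "e / 2"] e by fastforce
  have "norm (a n) < e" if "n \<ge> N + K" for n
  proof -
    have "K \<le> n - N" using that by arith
    then show ?thesis using bound[of "n - N"] K[of "n - N"] that by simp
  qed
  then show "\<exists>n0. \<forall>n\<ge>n0. norm (a n - 0) < e" by auto
qed

lemma fps_linear_factor_nth_tendsto_zero: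
  fixes F :: "complex fps"
  assumes w0: "cmod w0 > 1" and G: "(\<lambda>n. fps_nth (fps_of_poly [:- w0, 1:] * F) n) \<longlonglongrightarrow> 0"
  shows "(\<lambda>n. fps_nth F n) \<longlonglongrightarrow> 0"
proof -
  define G where "G = fps_of_poly [:- w0, 1:] * F"
  have "w0 \<noteq> 0" using w0 by auto
  have "G = fps_const (- w0) * F + fps_X * F"
    by (simp add: G_def fps_of_poly_pCons distrib_right)
  then have rec: "fps_nth F (Suc n) = (1 / w0) * fps_nth F n + (- fps_nth G (Suc n) / w0)" for n
    using \<open>w0 \<noteq> 0\<close> by (simp add: fps_mult_left_const_nth fps_X_mult_nth field_simps)
  have lim: "(\<lambda>n. - fps_nth G (Suc n) / w0) \<longlonglongrightarrow> 0"
    using tendsto_divide[OF tendsto_minus[OF LIMSEQ_Suc[OF G[folded G_def]]] tendsto_const[of w0]]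
      \<open>w0 \<noteq> 0\<close>
    by simp
  have "cmod (1 / w0) < 1" using w0 by (simp add: norm_divide divide_less_eq)
  from contractive_recurrence_tendsto_zero[OF this lim rec] show ?thesis .
qed

text \<open>Induction on the degree: splitting off a linear factor \<open>X - w\<^sub>0\<close> with \<open>|w\<^sub>0| > 1\<close> gives a
  contractive first-order recurrence for the coefficients.\<close>

lemma rational_fps_nth_tendsto_zero:
  fixes q r :: "complex poly" and F :: "complex fps"
  assumes "\<And>w. cmod w \<le> 1 \<Longrightarrow> poly q w \<noteq> 0" and "fps_of_poly q * F = fps_of_poly r"
  shows "(\<lambda>n. fps_nth F n) \<longlonglongrightarrow> 0"
  using assms
proof (induction "degree q" arbitrary: q r F rule: less_induct)
  case less
  show ?case
  proof (cases "degree q = 0")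
    case True
    then obtain c where qc: "q = [:c:]" by (metis degree_eq_zeroE)
    have "c \<noteq> 0" using less.prems(1)[of 0] qc by simp
    have "fps_nth F n = coeff r n / c" for n
      using arg_cong[OF less.prems(2), of "\<lambda>G. fps_nth G n"] \<open>c \<noteq> 0\<close> qc
      by (simp add: fps_of_poly_const fps_mult_left_const_nth field_simps)
    moreover have "eventually (\<lambda>n. coeff r n / c = 0) sequentially"
      by (intro eventually_sequentiallyI[of "Suc (degree r)"]) (simp add: coeff_eq_0)
    ultimately show ?thesis by (simp add: tendsto_eventually)
  next
    case False
    then have "\<not> constant (poly q)" by (simp add: constant_degree)
    then obtain w0 where w0: "poly q w0 = 0" using fundamental_theorem_of_algebra by blast
    then have "cmod w0 > 1" using less.prems(1) by force
    obtain q' where qq: "q = [:- w0, 1:] * q'" using w0 by (metis dvdE poly_eq_0_iff_dvd)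
    then have "q' \<noteq> 0" using False by auto
    then have "degree q = degree [:- w0, 1:] + degree q'"
      unfolding qq by (intro degree_mult_eq) auto
    then have deg: "degree q' < degree q" by simp
    have roots: "poly q' w \<noteq> 0" if "cmod w \<le> 1" for w
      using less.prems(1)[OF that] qq by auto
    have "fps_of_poly q' * (fps_of_poly [:- w0, 1:] * F) = fps_of_poly r"
      using less.prems(2) unfolding qq fps_of_poly_mult by (simp add: mult_ac)
    with deg roots have "(\<lambda>n. fps_nth (fps_of_poly [:- w0, 1:] * F) n) \<longlonglongrightarrow> 0"
      by (rule less.hyps)
    with \<open>cmod w0 > 1\<close> show ?thesis by (rule fps_linear_factor_nth_tendsto_zero)
  qed
qed

lemma det_eq_0_imp_kernel:
  fixes M :: "'a::field^'n^'n"
  assumes "det M = 0"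
  shows "\<exists>v. v \<noteq> 0 \<and> M *v v = 0"
proof -
  have "\<not> invertible M" using assms invertible_det_nz by blast
  then have "\<not> (\<exists>B. B ** M = mat 1)" using invertible_left_inverse by blast
  then show ?thesis using matrix_left_invertible_ker by blast
qed

lemma det_map_hom:
  fixes f :: "'a::comm_ring_1 \<Rightarrow> 'b::comm_ring_1" and M :: "'a^'n^'n"
  assumes add: "\<And>a b. f (a + b) = f a + f b" and mult: "\<And>a b. f (a * b) = f a * f b"
    and zero: "f 0 = 0" and one: "f 1 = 1" and neg: "\<And>a. f (- a) = - f a"
  shows "f (det M) = det (\<chi> i j. f (M $ i $ j))"
proof -
  have prod: "f (prod g S) = (\<Prod>x\<in>S. f (g x))" for g :: "'n \<Rightarrow> 'a" and S
    by (induction S rule: infinite_finite_induct) (auto simp: mult one)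
  have sign: "f (of_int (sign p)) = of_int (sign p)" for p :: "'n \<Rightarrow> 'n"
    by (cases p rule: sign_cases) (simp_all add: one neg)
  show ?thesis
    unfolding det_def sum_comp_morphism[of f, OF zero add, symmetric]
    by (simp add: comp_def mult prod sign)
qed

lemma fps_eq_fps_of_poly_truncate:
  fixes F :: "'a::comm_ring_1 fps"
  assumes "\<And>n. n > D \<Longrightarrow> fps_nth F n = 0"
  shows "F = fps_of_poly (truncate_fps (Suc D) F)"
  using assms by (simp add: fps_eq_iff not_less_eq)

text \<open>Proved in the field of Laurent series, where \<open>cramer_lemma\<close> applies.\<close>

lemma fps_cramer:
  fixes R :: "'a::field fps^'n^'n" and X :: "'a fps^'n"
  shows "X $ k * det R = det (\<chi> i j. if j = k then (R *v X) $ i else R $ i $ j)"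
proof -
  have hom: "fps_to_fls (det M) = det (\<chi> i j. fps_to_fls (M $ i $ j))" for M :: "'a fps^'n^'n"
    by (rule det_map_hom) (simp_all add: fls_times_fps_to_fls)
  define RL where "RL = (\<chi> i j. fps_to_fls (R $ i $ j))"
  define XL where "XL = (\<chi> j. fps_to_fls (X $ j))"
  have "fps_to_fls ((R *v X) $ i) = (RL *v XL) $ i" for i
    unfolding RL_def XL_def matrix_vector_mult_def vec_lambda_beta
    by (simp add: sum_comp_morphism[of fps_to_fls, symmetric] comp_def fls_times_fps_to_fls)
  then have "fps_to_fls (det (\<chi> i j. if j = k then (R *v X) $ i else R $ i $ j))
      = det (\<chi> i j. if j = k then (RL *v XL) $ i else RL $ i $ j)"
    unfolding hom by (simp add: RL_def if_distrib[of fps_to_fls] cong: if_cong)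
  also have "\<dots> = XL $ k * det RL" by (rule cramer_lemma)
  also have "\<dots> = fps_to_fls (X $ k * det R)"
    by (simp add: XL_def RL_def hom fls_times_fps_to_fls)
  finally show ?thesis by simp
qed


definition char_matrix :: "(nat \<Rightarrow> 'a::comm_ring_1^'n^'n) \<Rightarrow> nat \<Rightarrow> 'a \<Rightarrow> 'a^'n^'n" where
  "char_matrix L D w = (\<chi> i j. \<Sum>l\<le>D. w ^ l * L l $ i $ j)"

lemma char_matrix_mult_vec: "char_matrix L D w *v v = (\<Sum>l\<le>D. w ^ l *s (L l *v v))"
  by (simp add: vec_eq_iff char_matrix_def matrix_vector_mult_def sum_component
      sum_distrib_left sum_distrib_right mult.assoc sum.swap[of _ UNIV])

lemma matrix_recurrence_generating_function_nth:
  fixes L :: "nat \<Rightarrow> 'a::comm_ring_1^'n^'n" and x :: "nat \<Rightarrow> 'a^'n"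
  assumes rec: "\<And>n. n \<ge> D \<Longrightarrow> (\<Sum>l\<le>D. L l *v x (n - l)) = 0" and n: "n > D"
  shows "fps_nth (((\<chi> i j. fps_of_poly (\<Sum>l\<le>D. monom (L l $ i $ j) l)) *v
                   (\<chi> j. Abs_fps (\<lambda>n. x n $ j))) $ i) n = 0"
proof -
  have "coeff (\<Sum>l\<le>D. monom (L l $ i $ j) l) l = (if l \<le> D then L l $ i $ j else 0)" for j l
    by (simp add: coeff_sum sum.delta')
  then have "fps_nth (((\<chi> i j. fps_of_poly (\<Sum>l\<le>D. monom (L l $ i $ j) l)) *v
                   (\<chi> j. Abs_fps (\<lambda>n. x n $ j))) $ i) n
      = (\<Sum>j\<in>UNIV. \<Sum>l\<in>{0..n}. (if l \<le> D then L l $ i $ j else 0) * x (n - l) $ j)"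
    by (simp add: matrix_vector_mult_def fps_sum_nth fps_mult_nth)
  also have "\<dots> = (\<Sum>j\<in>UNIV. \<Sum>l\<le>D. L l $ i $ j * x (n - l) $ j)"
    using n by (intro sum.cong[OF refl] sum.mono_neutral_cong_right) auto
  also have "\<dots> = (\<Sum>l\<le>D. L l *v x (n - l)) $ i"
    by (simp add: sum_component matrix_vector_mult_def sum.swap[of _ UNIV])
  finally show ?thesis using rec n by simp
qed

text \<open>By Cramer's rule the generating function of each component of \<open>x\<close> is rational with
  denominator the polynomial \<open>w \<mapsto> det (char_matrix L D w)\<close>.\<close>

lemma matrix_recurrence_tendsto_zero:
  fixes L :: "nat \<Rightarrow> complex^'n^'n" and x :: "nat \<Rightarrow> complex^'n"
  assumes rec: "\<And>n. n \<ge> D \<Longrightarrow> (\<Sum>l\<le>D. L l *v x (n - l)) = 0"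
    and nonsing: "\<And>w. cmod w \<le> 1 \<Longrightarrow> det (char_matrix L D w) \<noteq> 0"
  shows "x \<longlonglongrightarrow> 0"
proof (rule vec_tendstoI)
  fix k
  define P :: "complex poly^'n^'n" where "P = (\<chi> i j. \<Sum>l\<le>D. monom (L l $ i $ j) l)"
  define R where "R = (\<chi> i j. fps_of_poly (P $ i $ j))"
  define X where "X = (\<chi> j. Abs_fps (\<lambda>n. x n $ j))"
  define C where "C = (\<chi> i j. if j = k then truncate_fps (Suc D) ((R *v X) $ i) else P $ i $ j)"
  have fps_of_poly_det: "fps_of_poly (det M) = det (\<chi> i j. fps_of_poly (M $ i $ j))" for M :: "complex poly^'n^'n"
    by (rule det_map_hom) (simp_all add: fps_of_poly_add fps_of_poly_mult fps_of_poly_uminus)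
  have "poly (det P) w = det (char_matrix L D w)" for w
    unfolding P_def char_matrix_def
    by (subst det_map_hom[of "\<lambda>p. poly p w"]) (simp_all add: poly_sum poly_monom mult.commute)
  then have roots: "poly (det P) w \<noteq> 0" if "cmod w \<le> 1" for w
    using nonsing[OF that] by simp
  have "(R *v X) $ i = fps_of_poly (truncate_fps (Suc D) ((R *v X) $ i))" for i
    by (rule fps_eq_fps_of_poly_truncate)
      (use matrix_recurrence_generating_function_nth[OF rec] in \<open>simp add: R_def X_def P_def\<close>)
  then have "det (\<chi> i j. if j = k then (R *v X) $ i else R $ i $ j) = fps_of_poly (det C)"
    unfolding fps_of_poly_det C_def R_def by (simp add: if_distrib[of fps_of_poly] cong: if_cong)
  then have "fps_of_poly (det P) * X $ k = fps_of_poly (det C)"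
    using fps_cramer[of X k R] by (simp add: R_def fps_of_poly_det mult.commute)
  from rational_fps_nth_tendsto_zero[OF roots this] show "(\<lambda>n. x n $ k) \<longlonglongrightarrow> 0 $ k"
    by (simp add: X_def)
qed

text \<open>With \<open>u = 0\<close> the recursion reads \<open>\<Sum>l\<le>m+1. L l *v y (n + 1 - l) = 0\<close>. The four
  contributions are added rather than cased because for \<open>m = 1\<close> the indices \<open>1\<close> and \<open>m\<close>
  coincide.\<close>

definition theta_coeffs ::
  "complex^'n^'n \<Rightarrow> complex^'n^'n \<Rightarrow> real \<Rightarrow> real \<Rightarrow> nat \<Rightarrow> nat \<Rightarrow> complex^'n^'n" where
  "theta_coeffs A B \<theta> h m l =
      (if l = 0 then mat 1 + (h * \<theta>) *\<^sub>R A else 0)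
    + (if l = 1 then (h * (1 - \<theta>)) *\<^sub>R A - mat 1 else 0)
    + (if l = m then - ((h * \<theta>) *\<^sub>R B) else 0)
    + (if l = m + 1 then - ((h * (1 - \<theta>)) *\<^sub>R B) else 0)"

lemma theta_coeffs_mult_vec:
  "theta_coeffs A B \<theta> h m l *v z =
      (if l = 0 then z + (h * \<theta>) *\<^sub>R (A *v z) else 0)
    + (if l = 1 then (h * (1 - \<theta>)) *\<^sub>R (A *v z) - z else 0)
    + (if l = m then - ((h * \<theta>) *\<^sub>R (B *v z)) else 0)
    + (if l = m + 1 then - ((h * (1 - \<theta>)) *\<^sub>R (B *v z)) else 0)"
  by (simp add: theta_coeffs_def matrix_vector_mult_add_rdistrib matrix_vector_mult_diff_rdistrib
      scaleR_matrix_vector_mult uminus_matrix_vector_mult)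

lemma theta_recursion_matrix_recurrence:
  assumes y: "theta_recursion A B \<theta> 0 m h y" and m: "m \<ge> 1" and n: "n \<ge> m + 1"
  shows "(\<Sum>l\<le>m + 1. theta_coeffs A B \<theta> h m l *v y (int (n - l) - int m)) = 0"
proof -
  define j where "j = n - (m + 1)"
  have nj: "n = j + m + 1" using n by (simp add: j_def)
  have rec: "y (int j + 1) = y (int j)
     + (h * (1 - \<theta>)) *\<^sub>R (- (A *v y (int j)) + B *v y (int j - int m))
     + (h * \<theta>) *\<^sub>R (- (A *v y (int j + 1)) + B *v y (int j - int m + 1))"
    using y by (auto simp: theta_recursion_def dest: spec[of _ "int j"])
  have "(\<Sum>l\<le>m + 1. theta_coeffs A B \<theta> h m l *v y (int (n - l) - int m)) =
      (y (int j + 1) + (h * \<theta>) *\<^sub>R (A *v y (int j + 1)))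
    + ((h * (1 - \<theta>)) *\<^sub>R (A *v y (int j)) - y (int j))
    - (h * \<theta>) *\<^sub>R (B *v y (int j - int m + 1))
    - (h * (1 - \<theta>)) *\<^sub>R (B *v y (int j - int m))"
    unfolding theta_coeffs_mult_vec sum.distrib
    using m by (simp add: sum.delta nj of_nat_diff algebra_simps del: atMost_Suc)
  also have "\<dots> = 0"
    by (subst rec) (simp add: algebra_simps)
  finally show ?thesis .
qed

lemma theta_char_matrix_mult_vec:
  assumes "m \<ge> 1"
  shows "char_matrix (theta_coeffs A B \<theta> h m) (m + 1) w *v v =
    (1 - w) *s v + (of_real h * (of_real \<theta> + of_real (1 - \<theta>) * w)) *s (A *v v)
      - (of_real h * w ^ m * (of_real \<theta> + of_real (1 - \<theta>) * w)) *s (B *v v)"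
proof -
  have smult_if: "c *s (if P then a else 0) = (if P then c *s a else 0)" for c :: complex and P a
    by simp
  show ?thesis
    unfolding char_matrix_mult_vec theta_coeffs_mult_vec vector_add_ldistrib smult_if sum.distrib
    using assms by (simp add: sum.delta scaleR_eq_smult algebra_simps del: atMost_Suc)
qed

lemma theta_char_matrix_nonsingular:
  fixes A B :: "complex^'n^'n" and w :: complex
  assumes "pos_def_mat A" "1/2 < \<theta>" "\<theta> \<le> 1" "h > 0" "m \<ge> 1" "cmod w \<le> 1"
    and "field_of_values (mat_powr A (p/2 - 1) ** B ** mat_powr A (- p/2)) \<subseteq> ball 0 1"
  shows "det (char_matrix (theta_coeffs A B \<theta> h m) (m + 1) w) \<noteq> 0"
proof
  assume "det (char_matrix (theta_coeffs A B \<theta> h m) (m + 1) w) = 0"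
  then obtain v where v: "v \<noteq> 0" "char_matrix (theta_coeffs A B \<theta> h m) (m + 1) w *v v = 0"
    using det_eq_0_imp_kernel by blast
  then have "(1 - w) *s v + (of_real h * (of_real \<theta> + of_real (1 - \<theta>) * w)) *s (A *v v)
      = (of_real h * w ^ m * (of_real \<theta> + of_real (1 - \<theta>) * w)) *s (B *v v)"
    unfolding theta_char_matrix_mult_vec[OF assms(5)] by simp
  with v(1) show False
    using theta_characteristic_kernel_trivial[OF assms(1-4,6,7)] by blast
qed

theorem mainTheorem3:
  fixes A B :: "complex^'n^'n" and \<tau> \<theta> :: real
  assumes "\<tau> > 0"
    and "pos_def_mat A"
    and "1/2 < \<theta>" and "\<theta> \<le> 1"
    and "\<exists>p::real. field_of_values (mat_powr A (p/2 - 1) ** B ** mat_powr A (- p/2)) \<subseteq> ball 0 1"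
  shows "\<forall>m::nat. m \<ge> 1 \<longrightarrow> theta_stable A B \<theta> 0 m (\<tau> / real m)"
proof (intro allI impI)
  fix m :: nat assume m: "m \<ge> 1"
  obtain p where F: "field_of_values (mat_powr A (p/2 - 1) ** B ** mat_powr A (- p/2)) \<subseteq> ball 0 1"
    using assms(5) by blast
  have h: "\<tau> / real m > 0" using m assms(1) by simp
  show "theta_stable A B \<theta> 0 m (\<tau> / real m)"
    unfolding theta_stable_def
  proof (intro allI impI)
    fix y assume y: "theta_recursion A B \<theta> 0 m (\<tau> / real m) y"
    have "(\<lambda>n. y (int n - int m)) \<longlonglongrightarrow> 0"
      by (rule matrix_recurrence_tendsto_zero[OF theta_recursion_matrix_recurrence[OF y m]
            theta_char_matrix_nonsingular[OF assms(2-4) h m _ F]])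
    from LIMSEQ_ignore_initial_segment[OF this, of m] show "(\<lambda>n. y (int n)) \<longlonglongrightarrow> 0"
      by simp
  qed
qed

end
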